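(* The centre of the affine Schur algebra $\mathcal S=\mathrm{End}_{\mathcal H}(\bigoplus_{J\subseteq\mathbb I}\mathbf v_J\mathcal H)$ is $Z(\mathcal S)=\{\cdot z\mid z\in Z(\mathcal H)\}$, the set of endomorphisms given by multiplication with central elements $z$ of $\mathcal H$.
   Context: Setting: $q$ is the residue field cardinality of a finite extension of $\mathbb Q_p$, $\Bbbk$ algebraically closed of characteristic $\ne p$ with $q\ne1$, $n\ge 2$. $\mathcal H$ is the unital $\Bbbk$-algebra generated by $T_1,\dots,T_{n-1},X_1^{\pm1},\dots,X_n^{\pm1}$ with $(T_i-q)(T_i+1)=0$, braid relations among the $T_i$, commuting Laurent variables $X_j$, $T_iX_j=X_jT_i$ for $j\notin\{i,i+1\}$, and $T_iX_iT_i=qX_{i+1}$. $\mathbb I=\{s_1,\dots,s_{n-1}\}$ are the simple transpositions of $\mathfrak S_n$, $W_J=\langle J\rangle$, $T_w=T_{i_1}\cdots T_{i_r}$ for reduced $w=s_{i_1}\cdots s_{i_r}$, $\mathbf v_J=\sum_{w\in W_J}T_w$, and $\mathbf v_J\mathcal H$ are right ideals; $\mathcal S$ has product given by composition. (Multiplication by a central $z$ preserves each $\mathbf v_J\mathcal H$ and is $\mathcal H$-linear.) *)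

theory Defs
  imports Main "HOL-Computational_Algebra.Polynomial" "HOL-Computational_Algebra.Primes"
begin

datatype hgen = GT nat | GX nat | GXi nat
  \<comment> \<open>GT i = T_i, GX j = X_j, GXi j = X_j^{-1}\<close>

definition valid_gens :: "nat \<Rightarrow> hgen set" where
  "valid_gens n = GT ` {1..<n} \<union> GX ` {1..n} \<union> GXi ` {1..n}"

text \<open>An element of the free (noncommutative) k-algebra on the generators is a finitely
  supported coefficient function on words in the generators.\<close>
definition free_elt :: "nat \<Rightarrow> (hgen list \<Rightarrow> 'k::field) \<Rightarrow> bool" where
  "free_elt n c \<longleftrightarrow> finite {w. c w \<noteq> 0} \<and> (\<forall>w. c w \<noteq> 0 \<longrightarrow> set w \<subseteq> valid_gens n)"

definition lc :: "('k::field \<times> hgen list) list \<Rightarrow> hgen list \<Rightarrow> 'k" where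
  "lc ts = (\<lambda>v. sum_list (map (\<lambda>(c, w). if w = v then c else 0) ts))"

text \<open>u * r * v in the free algebra, for words u, v.\<close>
definition sandwich :: "hgen list \<Rightarrow> (hgen list \<Rightarrow> 'k::field) \<Rightarrow> hgen list \<Rightarrow> hgen list \<Rightarrow> 'k" where
  "sandwich u r v = (\<lambda>w. if length u + length v \<le> length w \<and> take (length u) w = u
        \<and> drop (length w - length v) w = v
     then r (drop (length u) (take (length w - length v) w)) else 0)"

text \<open>The defining relations of the affine Hecke algebra (as elements of the free algebra,
  each required to be zero); q is the residue field cardinality.\<close>
definition hecke_rels :: "nat \<Rightarrow> nat \<Rightarrow> (hgen list \<Rightarrow> 'k::field) set" where
  "hecke_rels n q =
     {lc [(1, [GT i, GT i]), (- (of_nat q - 1), [GT i]), (- of_nat q, [])] | i. 1 \<le> i \<and> i < n}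
   \<union> {lc [(1, [GT i, GT (Suc i), GT i]), (-1, [GT (Suc i), GT i, GT (Suc i)])] | i. 1 \<le> i \<and> Suc i < n}
   \<union> {lc [(1, [GT i, GT j]), (-1, [GT j, GT i])] | i j. 1 \<le> i \<and> i < n \<and> 1 \<le> j \<and> j < n \<and> (Suc i < j \<or> Suc j < i)}
   \<union> {lc [(1, [GX j, GXi j]), (-1, [])] | j. 1 \<le> j \<and> j \<le> n}
   \<union> {lc [(1, [GXi j, GX j]), (-1, [])] | j. 1 \<le> j \<and> j \<le> n}
   \<union> {lc [(1, [a, b]), (-1, [b, a])] | a b. a \<in> GX ` {1..n} \<union> GXi ` {1..n} \<and> b \<in> GX ` {1..n} \<union> GXi ` {1..n}}
   \<union> {lc [(1, [GT i, GX j]), (-1, [GX j, GT i])] | i j. 1 \<le> i \<and> i < n \<and> 1 \<le> j \<and> j \<le> n \<and> j \<noteq> i \<and> j \<noteq> Suc i}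
   \<union> {lc [(1, [GT i, GX i, GT i]), (- of_nat q, [GX (Suc i)])] | i. 1 \<le> i \<and> i < n}"

inductive_set hecke_ideal :: "nat \<Rightarrow> nat \<Rightarrow> (hgen list \<Rightarrow> 'k::field) set" for n q where
  zero: "(\<lambda>_. 0) \<in> hecke_ideal n q"
| add: "a \<in> hecke_ideal n q \<Longrightarrow> b \<in> hecke_ideal n q \<Longrightarrow> (\<lambda>w. a w + b w) \<in> hecke_ideal n q"
| smult: "a \<in> hecke_ideal n q \<Longrightarrow> (\<lambda>w. c * a w) \<in> hecke_ideal n q"
| gen: "r \<in> hecke_rels n q \<Longrightarrow> set u \<subseteq> valid_gens n \<Longrightarrow> set v \<subseteq> valid_gens n
        \<Longrightarrow> sandwich u r v \<in> hecke_ideal n q"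

definition gen_val :: "(nat \<Rightarrow> 'h) \<Rightarrow> (nat \<Rightarrow> 'h) \<Rightarrow> (nat \<Rightarrow> 'h) \<Rightarrow> hgen \<Rightarrow> 'h" where
  "gen_val T X Xi g = (case g of GT i \<Rightarrow> T i | GX j \<Rightarrow> X j | GXi j \<Rightarrow> Xi j)"

definition eval_free :: "('k::field \<Rightarrow> 'h::ring_1) \<Rightarrow> (nat \<Rightarrow> 'h) \<Rightarrow> (nat \<Rightarrow> 'h) \<Rightarrow> (nat \<Rightarrow> 'h)
    \<Rightarrow> (hgen list \<Rightarrow> 'k) \<Rightarrow> 'h" where
  "eval_free sc T X Xi c = (\<Sum>w\<in>{w. c w \<noteq> 0}. sc (c w) * prod_list (map (gen_val T X Xi) w))"

text \<open>'h, with scalars sc and elements T_i, X_j, X_j^{-1}, is (isomorphic to) the unital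
  k-algebra presented by the generators and relations of the affine Hecke algebra:
  the evaluation map from the free algebra is surjective with kernel exactly the ideal
  generated by the relations.\<close>
definition is_affine_hecke ::
  "nat \<Rightarrow> nat \<Rightarrow> ('k::field \<Rightarrow> 'h::ring_1) \<Rightarrow> (nat \<Rightarrow> 'h) \<Rightarrow> (nat \<Rightarrow> 'h) \<Rightarrow> (nat \<Rightarrow> 'h) \<Rightarrow> bool" where
  "is_affine_hecke n q sc T X Xi \<longleftrightarrow>
     sc 1 = 1 \<and> (\<forall>a b. sc (a + b) = sc a + sc b) \<and> (\<forall>a b. sc (a * b) = sc a * sc b)
   \<and> (\<forall>a h. sc a * h = h * sc a)
   \<and> (\<forall>c. free_elt n c \<longrightarrow> (eval_free sc T X Xi c = 0 \<longleftrightarrow> c \<in> hecke_ideal n q))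
   \<and> (\<forall>h. \<exists>c. free_elt n c \<and> eval_free sc T X Xi c = h)"

definition stp :: "nat \<Rightarrow> nat \<Rightarrow> nat" where
  "stp i = (\<lambda>x. if x = i then Suc i else if x = Suc i then i else x)"

definition perm_of_word :: "nat list \<Rightarrow> nat \<Rightarrow> nat" where
  "perm_of_word ws = foldr (\<lambda>i f. stp i \<circ> f) ws id"

definition reduced_word :: "nat \<Rightarrow> nat list \<Rightarrow> (nat \<Rightarrow> nat) \<Rightarrow> bool" where
  "reduced_word n ws w \<longleftrightarrow> set ws \<subseteq> {1..<n} \<and> perm_of_word ws = w
     \<and> (\<forall>ws'. set ws' \<subseteq> {1..<n} \<and> perm_of_word ws' = w \<longrightarrow> length ws \<le> length ws')"

text \<open>Parabolic subgroup W_J, J a subset of {1..n-1} (indices of simple transpositions).\<close>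
definition WJ :: "nat set \<Rightarrow> (nat \<Rightarrow> nat) set" where
  "WJ J = perm_of_word ` lists J"

definition Tw :: "nat \<Rightarrow> (nat \<Rightarrow> 'h::ring_1) \<Rightarrow> (nat \<Rightarrow> nat) \<Rightarrow> 'h" where
  "Tw n T w = prod_list (map T (SOME ws. reduced_word n ws w))"

definition vJ :: "nat \<Rightarrow> (nat \<Rightarrow> 'h::ring_1) \<Rightarrow> nat set \<Rightarrow> 'h" where
  "vJ n T J = (\<Sum>w\<in>WJ J. Tw n T w)"

definition schur_mod :: "nat \<Rightarrow> (nat \<Rightarrow> 'h::ring_1) \<Rightarrow> (nat set \<Rightarrow> 'h) set" where
  "schur_mod n T = {m. \<forall>J. (J \<subseteq> {1..<n} \<longrightarrow> (\<exists>h. m J = vJ n T J * h))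
                          \<and> (\<not> J \<subseteq> {1..<n} \<longrightarrow> m J = 0)}"

text \<open>H-linear endomorphisms of the right H-module (extensional: zero outside the module).\<close>
definition schur_alg :: "nat \<Rightarrow> (nat \<Rightarrow> 'h::ring_1) \<Rightarrow> ((nat set \<Rightarrow> 'h) \<Rightarrow> (nat set \<Rightarrow> 'h)) set" where
  "schur_alg n T = {f. (\<forall>m\<in>schur_mod n T. f m \<in> schur_mod n T)
     \<and> (\<forall>m\<in>schur_mod n T. \<forall>m'\<in>schur_mod n T. f (\<lambda>J. m J + m' J) = (\<lambda>J. f m J + f m' J))
     \<and> (\<forall>m\<in>schur_mod n T. \<forall>h. f (\<lambda>J. m J * h) = (\<lambda>J. f m J * h))
     \<and> (\<forall>m. m \<notin> schur_mod n T \<longrightarrow> f m = (\<lambda>_. 0))}"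

definition center_of :: "('a \<Rightarrow> 'a) set \<Rightarrow> ('a \<Rightarrow> 'a) set" where
  "center_of S = {f\<in>S. \<forall>g\<in>S. f \<circ> g = g \<circ> f}"

definition ring_center :: "'h::ring_1 set" where
  "ring_center = {z. \<forall>h. z * h = h * z}"

definition mult_map :: "nat \<Rightarrow> (nat \<Rightarrow> 'h::ring_1) \<Rightarrow> 'h \<Rightarrow> (nat set \<Rightarrow> 'h) \<Rightarrow> (nat set \<Rightarrow> 'h)" where
  "mult_map n T z = (\<lambda>m. if m \<in> schur_mod n T then (\<lambda>J. m J * z) else (\<lambda>_. 0))"

end

theory Submission
  imports Defs
begin

text \<open>Since \<open>v\<^sub>\<emptyset> = 1\<close>, the summand indexed by \<open>\<emptyset>\<close> is \<open>\<H>\<close> itself. The Schur algebra therefore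
  contains the projections onto the summands and, for every \<open>x \<in> v\<^sub>K\<H>\<close>, the map sending the
  \<open>\<emptyset>\<close>-component \<open>h\<close> to \<open>x h\<close> in the \<open>K\<close>-summand. A central endomorphism \<open>f\<close> commutes with
  all of these, so it acts on each component as right multiplication by \<open>z = f(1\<^sub>\<emptyset>)\<^sub>\<emptyset>\<close>;
  \<open>\<H>\<close>-linearity on the \<open>\<emptyset>\<close>-summand then forces \<open>z\<close> to be central. The argument uses nothing
  about \<open>\<H>\<close> beyond \<open>v\<^sub>\<emptyset> = 1\<close>.\<close>

definition summand_inj :: "nat set \<Rightarrow> 'h::zero \<Rightarrow> nat set \<Rightarrow> 'h" where
  "summand_inj K x = (\<lambda>J. if J = K then x else 0)"

definition schur_endo ::
  "nat \<Rightarrow> (nat \<Rightarrow> 'h::ring_1) \<Rightarrow> ((nat set \<Rightarrow> 'h) \<Rightarrow> (nat set \<Rightarrow> 'h)) \<Rightarrow> (nat set \<Rightarrow> 'h) \<Rightarrow> (nat set \<Rightarrow> 'h)"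
  where "schur_endo n T \<phi> = (\<lambda>m. if m \<in> schur_mod n T then \<phi> m else (\<lambda>_. 0))"

lemma vJ_empty: "vJ n T {} = (1::'h::ring_1)"
proof -
  have WJ_empty: "WJ {} = {id}"
    unfolding WJ_def by (auto simp: perm_of_word_def)
  have "reduced_word n [] id"
    unfolding reduced_word_def by (simp add: perm_of_word_def)
  moreover have "ws = []" if "reduced_word n ws id" for ws
    using that unfolding reduced_word_def by (auto dest!: spec[of _ "[]"] simp: perm_of_word_def)
  ultimately have "(SOME ws. reduced_word n ws id) = []"
    by (metis someI)
  then show ?thesis
    by (simp add: vJ_def Tw_def WJ_empty)
qed

lemma schur_modD:
  assumes "m \<in> schur_mod n T"
  shows "J \<subseteq> {1..<n} \<Longrightarrow> \<exists>h. m J = vJ n T J * h"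
    and "\<not> J \<subseteq> {1..<n} \<Longrightarrow> m J = 0"
  using assms unfolding schur_mod_def by blast+

lemma schur_modI:
  "(\<And>J. J \<subseteq> {1..<n} \<Longrightarrow> \<exists>h. m J = vJ n T J * h) \<Longrightarrow> (\<And>J. \<not> J \<subseteq> {1..<n} \<Longrightarrow> m J = 0)
    \<Longrightarrow> m \<in> schur_mod n T"
  unfolding schur_mod_def by blast

lemma summand_inj_in_schur_mod:
  assumes "K \<subseteq> {1..<n}"
  shows "summand_inj K (vJ n T K * h) \<in> schur_mod n T"
proof (rule schur_modI)
  fix J
  show "\<exists>h'. summand_inj K (vJ n T K * h) J = vJ n T J * h'"
    by (cases "J = K") (auto simp: summand_inj_def intro: exI[of _ 0])
  show "summand_inj K (vJ n T K * h) J = 0" if "\<not> J \<subseteq> {1..<n}"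
    using that assms by (auto simp: summand_inj_def)
qed

lemma summand_inj_empty_in_schur_mod: "summand_inj {} h \<in> schur_mod n T"
  using summand_inj_in_schur_mod[of "{}" n T h] by (simp add: vJ_empty)

lemma zero_in_schur_mod: "(\<lambda>_. 0) \<in> schur_mod n T"
  by (rule schur_modI) (auto intro: exI[of _ 0])

lemma component_in_schur_mod:
  assumes "m \<in> schur_mod n T"
  shows "summand_inj K (m K) \<in> schur_mod n T"
proof (cases "K \<subseteq> {1..<n}")
  case True
  then obtain h where "m K = vJ n T K * h"
    using schur_modD(1)[OF assms] by blast
  then show ?thesis
    using summand_inj_in_schur_mod[OF True] by simp
next
  case False
  then have "summand_inj K (m K) = (\<lambda>_. 0)"
    using schur_modD(2)[OF assms] by (auto simp: summand_inj_def)
  then show ?thesis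
    using zero_in_schur_mod by simp
qed

lemma add_in_schur_mod:
  assumes m: "m \<in> schur_mod n T" and m': "m' \<in> schur_mod n T"
  shows "(\<lambda>J. m J + m' J) \<in> schur_mod n T"
proof (rule schur_modI)
  fix J
  assume "J \<subseteq> {1..<n}"
  then obtain h h' where "m J = vJ n T J * h" "m' J = vJ n T J * h'"
    using schur_modD(1) m m' by metis
  then have "m J + m' J = vJ n T J * (h + h')"
    by (simp add: distrib_left)
  then show "\<exists>h. m J + m' J = vJ n T J * h" ..
qed (simp add: schur_modD(2)[OF m] schur_modD(2)[OF m'])

lemma mult_right_in_schur_mod:
  assumes m: "m \<in> schur_mod n T"
  shows "(\<lambda>J. m J * h) \<in> schur_mod n T"
proof (rule schur_modI)
  fix J
  assume "J \<subseteq> {1..<n}"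
  then obtain h' where "m J = vJ n T J * h'"
    using schur_modD(1)[OF m] by blast
  then have "m J * h = vJ n T J * (h' * h)"
    by (simp add: mult.assoc)
  then show "\<exists>h'. m J * h = vJ n T J * h'" ..
qed (simp add: schur_modD(2)[OF m])

lemma schur_algD:
  assumes "f \<in> schur_alg n T"
  shows schur_alg_closed: "m \<in> schur_mod n T \<Longrightarrow> f m \<in> schur_mod n T"
    and schur_alg_mult_right: "m \<in> schur_mod n T \<Longrightarrow> f (\<lambda>J. m J * h) = (\<lambda>J. f m J * h)"
    and schur_alg_outside: "m \<notin> schur_mod n T \<Longrightarrow> f m = (\<lambda>_. 0)"
  using assms unfolding schur_alg_def by blast+

lemma schur_alg_zero:
  assumes "f \<in> schur_alg n T"
  shows "f (\<lambda>_. 0) = (\<lambda>_. 0)"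
  using schur_alg_mult_right[OF assms zero_in_schur_mod, of 0] by simp

lemma schur_endo_in_schur_alg:
  assumes "\<And>m. m \<in> schur_mod n T \<Longrightarrow> \<phi> m \<in> schur_mod n T"
    and "\<And>m m'. m \<in> schur_mod n T \<Longrightarrow> m' \<in> schur_mod n T
           \<Longrightarrow> \<phi> (\<lambda>J. m J + m' J) = (\<lambda>J. \<phi> m J + \<phi> m' J)"
    and "\<And>m h. m \<in> schur_mod n T \<Longrightarrow> \<phi> (\<lambda>J. m J * h) = (\<lambda>J. \<phi> m J * h)"
  shows "schur_endo n T \<phi> \<in> schur_alg n T"
  using assms add_in_schur_mod[of _ n T] mult_right_in_schur_mod[of _ n T]
  by (auto simp: schur_alg_def schur_endo_def)

lemma projection_in_schur_alg:
  "schur_endo n T (\<lambda>m. summand_inj K (m K)) \<in> schur_alg n T"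
  using component_in_schur_mod[of _ n T K]
  by (intro schur_endo_in_schur_alg) (auto simp: summand_inj_def)

lemma mult_left_from_empty_in_schur_alg:
  assumes "K \<subseteq> {1..<n}"
  shows "schur_endo n T (\<lambda>m. summand_inj K (vJ n T K * h * m {})) \<in> schur_alg n T"
  using summand_inj_in_schur_mod[OF assms, of T "h * _"]
  by (intro schur_endo_in_schur_alg) (auto simp: summand_inj_def mult.assoc distrib_left)

lemma mult_map_eq_schur_endo: "mult_map n T z = schur_endo n T (\<lambda>m J. m J * z)"
  by (simp add: mult_map_def schur_endo_def)

lemma mult_map_in_schur_alg:
  assumes "z \<in> ring_center"
  shows "mult_map n T z \<in> schur_alg n T"
  unfolding mult_map_eq_schur_endo
  using assms mult_right_in_schur_mod
  by (intro schur_endo_in_schur_alg) (auto simp: ring_center_def distrib_right mult.assoc)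

lemma mult_map_commute:
  assumes "g \<in> schur_alg n T"
  shows "mult_map n T z \<circ> g = g \<circ> mult_map n T z"
proof
  fix m
  show "(mult_map n T z \<circ> g) m = (g \<circ> mult_map n T z) m"
  proof (cases "m \<in> schur_mod n T")
    case True
    then show ?thesis
      using schur_alg_closed[OF assms] schur_alg_mult_right[OF assms] by (simp add: mult_map_def)
  next
    case False
    then show ?thesis
      using schur_alg_outside[OF assms] schur_alg_zero[OF assms] zero_in_schur_mod
      by (simp add: mult_map_def)
  qed
qed

lemma center_ofD:
  assumes "f \<in> center_of S"
  shows "f \<in> S" and "g \<in> S \<Longrightarrow> f (g m) = g (f m)"
  using assms unfolding center_of_def by (auto simp: fun_eq_iff)

lemma central_endo_on_summand:
  assumes f: "f \<in> center_of (schur_alg n T)" and K: "K \<subseteq> {1..<n}"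
  shows "f (summand_inj K (vJ n T K * h)) = summand_inj K (vJ n T K * h * f (summand_inj {} 1) {})"
proof -
  let ?g = "schur_endo n T (\<lambda>m. summand_inj K (vJ n T K * h * m {}))"
  note unit_in = summand_inj_empty_in_schur_mod[of 1 n T]
  have "f (summand_inj {} 1) \<in> schur_mod n T"
    using center_ofD(1)[OF f] unit_in by (rule schur_alg_closed)
  then have "?g (f (summand_inj {} 1)) = summand_inj K (vJ n T K * h * f (summand_inj {} 1) {})"
    by (simp add: schur_endo_def)
  moreover have "?g (summand_inj {} 1) = summand_inj K (vJ n T K * h)"
    using unit_in by (simp add: schur_endo_def) (simp add: summand_inj_def)
  moreover have "f (?g (summand_inj {} 1)) = ?g (f (summand_inj {} 1))"
    using center_ofD(2)[OF f mult_left_from_empty_in_schur_alg[OF K]] .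
  ultimately show ?thesis
    by simp
qed

lemma central_endo_component:
  assumes f: "f \<in> center_of (schur_alg n T)" and m: "m \<in> schur_mod n T"
  shows "f m K = f (summand_inj K (m K)) K"
proof -
  let ?p = "schur_endo n T (\<lambda>m. summand_inj K (m K))"
  have "f m \<in> schur_mod n T"
    using center_ofD(1)[OF f] m by (rule schur_alg_closed)
  moreover have "f (?p m) = ?p (f m)"
    using center_ofD(2)[OF f projection_in_schur_alg] .
  ultimately show ?thesis
    using m by (simp add: schur_endo_def summand_inj_def)
qed

lemma central_endo_unit_value_central:
  fixes T :: "nat \<Rightarrow> 'h::ring_1"
  assumes f: "f \<in> center_of (schur_alg n T)"
  shows "f (summand_inj {} 1) {} \<in> ring_center"
  unfolding ring_center_def
proof (intro CollectI allI)
  fix h :: 'h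
  have "summand_inj {} h = (\<lambda>J. summand_inj {} 1 J * h)"
    by (simp add: summand_inj_def fun_eq_iff)
  then have "f (summand_inj {} h) = (\<lambda>J. f (summand_inj {} 1) J * h)"
    using schur_alg_mult_right[OF center_ofD(1)[OF f] summand_inj_empty_in_schur_mod] by simp
  moreover have "f (summand_inj {} h) = summand_inj {} (h * f (summand_inj {} 1) {})"
    using central_endo_on_summand[OF f, of "{}" h] by (simp add: vJ_empty)
  ultimately have "(\<lambda>J. f (summand_inj {} 1) J * h) = summand_inj {} (h * f (summand_inj {} 1) {})"
    by simp
  from fun_cong[OF this, of "{}"] show "f (summand_inj {} 1) {} * h = h * f (summand_inj {} 1) {}"
    by (simp add: summand_inj_def)
qed

lemma center_of_schur_alg_subset:
  fixes T :: "nat \<Rightarrow> 'h::ring_1"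
  assumes f: "f \<in> center_of (schur_alg n T)"
  shows "f \<in> mult_map n T ` ring_center"
proof -
  have fS: "f \<in> schur_alg n T"
    using center_ofD(1)[OF f] .
  define z where "z = f (summand_inj {} 1) {}"
  have on_summand: "f (summand_inj K (vJ n T K * h)) = summand_inj K (vJ n T K * h * z)"
    if "K \<subseteq> {1..<n}" for K h
    using central_endo_on_summand[OF f that] by (simp add: z_def)
  have "z \<in> ring_center"
    unfolding z_def using f by (rule central_endo_unit_value_central)
  moreover have "f = mult_map n T z"
  proof
    fix m
    show "f m = mult_map n T z m"
    proof (cases "m \<in> schur_mod n T")
      case m: True
      have "f m K = m K * z" for K
      proof (cases "K \<subseteq> {1..<n}")
        case True
        then obtain h where "m K = vJ n T K * h"
          using schur_modD(1)[OF m] by blast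
        then show ?thesis
          using central_endo_component[OF f m, of K] on_summand[OF True, of h]
          by (simp add: summand_inj_def)
      next
        case False
        then show ?thesis
          using schur_modD(2)[OF m] schur_modD(2)[OF schur_alg_closed[OF fS m]] by simp
      qed
      then show ?thesis
        using m by (auto simp: mult_map_def)
    next
      case False
      then show ?thesis
        using schur_alg_outside[OF fS] by (simp add: mult_map_def)
    qed
  qed
  ultimately show ?thesis
    by blast
qed

theorem lemma4p14:
  fixes p q n :: nat
    and sc :: "'k::field \<Rightarrow> 'h::ring_1"
    and T X Xi :: "nat \<Rightarrow> 'h"
  assumes "prime p"
    and "\<exists>f\<ge>1. q = p ^ f"
    and "\<forall>P :: 'k poly. degree P > 0 \<longrightarrow> (\<exists>x. poly P x = 0)"
    and "of_nat p \<noteq> (0::'k)"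
    and "of_nat q \<noteq> (1::'k)"
    and "n \<ge> 2"
    and "is_affine_hecke n q sc T X Xi"
  shows "center_of (schur_alg n T) = mult_map n T ` ring_center"
proof
  show "center_of (schur_alg n T) \<subseteq> mult_map n T ` ring_center"
    using center_of_schur_alg_subset by blast
  show "mult_map n T ` ring_center \<subseteq> center_of (schur_alg n T)"
    using mult_map_in_schur_alg mult_map_commute by (fastforce simp: center_of_def)
qed

end
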